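(* For DCG models: (a) if a DCG model $(G^*,\mathbb{P})$ satisfies the causal faithfulness condition (CFC), then it satisfies the weak SMR assumption; (b) there exists a DCG model $(G,\mathbb{P})$ satisfying the CFC that does not satisfy the identifiable SMR assumption; (c) if a DCG model $(G^*,\mathbb{P})$ satisfies the identifiable SMR assumption, then it satisfies the P-minimality assumption; (d) there exists a DCG model $(G,\mathbb{P})$ satisfying the weak SMR assumption that does not satisfy the P-minimality assumption.
   Context: A DCG is a directed graph $G=(V,E)$ on $V=\{1,\dots,p\}$, directed cycles allowed. A DCG model is a pair $(G,\mathbb{P})$ with $\mathbb{P}$ a probability distribution of a random vector $(X_1,\dots,X_p)$. Descendant/ancestor refer to directed paths. $j,k$ are really adjacent if $j\to k$ or $k\to j$, virtually adjacent if they have a common child $\ell$ that is an ancestor of $j$ or $k$; the skeleton $S(G)$ is the set of really or virtually adjacent pairs, and $|S(G)|$ its cardinality. d-connection: for $S\subset V\setminus\{j,k\}$, $j$ is d-connected to $k$ given $S$ if some undirected path between them has every interior vertex in $S$ a collider ($\to b\leftarrow$ on the path) and every collider with itself or a descendant in $S$; otherwise d-separated. $D_{sep}(G)$ is the set of triples $(j,k,S)$ with $j$ d-separated from $k$ given $S$. $(G,\mathbb{P})$ satisfies the causal Markov condition (CMC) if whenever $j$ is d-separated from $k$ given $S$ in $G$, $X_j\perp X_k\mid X_S$ under $\mathbb{P}$. Two DCGs are Markov equivalent if every distribution satisfying the CMC with respect to one satisfies it with respect to the other; $\mathcal{M}(G)$ is the Markov equivalence class of $G$. CFC: for all $j,k$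 and $S\subset V\setminus\{j,k\}$, $j$ is d-separated from $k$ given $S$ in $G^*$ iff $X_j\perp X_k\mid X_S$ under $\mathbb{P}$. Identifiable SMR: $(G^*,\mathbb{P})$ satisfies the CMC and $|S(G^* )|<|S(G)|$ for every DCG $G$ with $(G,\mathbb{P})$ satisfying the CMC and $G\notin\mathcal{M}(G^* )$. Weak SMR: same with $\le$ instead of $<$. P-minimality: $(G^*,\mathbb{P})$ satisfies the CMC and there is no DCG $G$ with $(G,\mathbb{P})$ satisfying the CMC, $G\notin\mathcal{M}(G^* )$, and $D_{sep}(G^* )\subsetneq D_{sep}(G)$. *)

theory Defs
  imports "HOL-Probability.Probability"
begin

(* Vertex set V = {1..p}.  A DCG on V is a set of directed edges (j,k) meaning j -> k,
   no self-loops. *)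
definition dcg :: "nat \<Rightarrow> (nat \<times> nat) set \<Rightarrow> bool" where
  "dcg p E \<longleftrightarrow> E \<subseteq> {1..p} \<times> {1..p} \<and> (\<forall>j. (j, j) \<notin> E)"

definition anc :: "(nat \<times> nat) set \<Rightarrow> nat \<Rightarrow> nat \<Rightarrow> bool" where
  "anc E a b \<longleftrightarrow> (a, b) \<in> E\<^sup>*"

definition really_adj :: "(nat \<times> nat) set \<Rightarrow> nat \<Rightarrow> nat \<Rightarrow> bool" where
  "really_adj E j k \<longleftrightarrow> (j, k) \<in> E \<or> (k, j) \<in> E"

definition virtually_adj :: "(nat \<times> nat) set \<Rightarrow> nat \<Rightarrow> nat \<Rightarrow> bool" where
  "virtually_adj E j k \<longleftrightarrow>
     (\<exists>l. (j, l) \<in> E \<and> (k, l) \<in> E \<and> (anc E l j \<or> anc E l k))"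

(* skeleton: unordered pairs {j,k}, represented as (j,k) with j < k *)
definition skeleton :: "(nat \<times> nat) set \<Rightarrow> (nat \<times> nat) set" where
  "skeleton E = {(j, k). j < k \<and> (really_adj E j k \<or> virtually_adj E j k)}"

(* An undirected path between j and k: a list of distinct vertices vs with vs!0 = j,
   last vs = k, together with a list ds of edge orientations: ds!i = True means the
   edge vs!i -> vs!(i+1) is used, ds!i = False means vs!(i+1) -> vs!i is used.
   (Recording the edge used matters when both j->k and k->j are present.) *)
definition is_path :: "(nat \<times> nat) set \<Rightarrow> nat \<Rightarrow> nat \<Rightarrow> nat list \<Rightarrow> bool list \<Rightarrow> bool" where
  "is_path E j k vs ds \<longleftrightarrow>
     vs \<noteq> [] \<and> hd vs = j \<and> last vs = k \<and> distinct vs \<and>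
     length ds + 1 = length vs \<and>
     (\<forall>i < length ds. (if ds ! i then (vs ! i, vs ! Suc i) \<in> E
                                 else (vs ! Suc i, vs ! i) \<in> E))"

(* the interior vertex vs!i (0 < i < length vs - 1) is a collider: -> vs!i <- *)
definition collider_at :: "bool list \<Rightarrow> nat \<Rightarrow> bool" where
  "collider_at ds i \<longleftrightarrow> ds ! (i - 1) \<and> \<not> ds ! i"

definition d_connected :: "(nat \<times> nat) set \<Rightarrow> nat \<Rightarrow> nat \<Rightarrow> nat set \<Rightarrow> bool" where
  "d_connected E j k S \<longleftrightarrow>
     (\<exists>vs ds. is_path E j k vs ds \<and>
        (\<forall>i. 0 < i \<and> i < length ds \<longrightarrow>
           (vs ! i \<in> S \<longrightarrow> collider_at ds i) \<and>
           (collider_at ds i \<longrightarrow> (\<exists>s\<in>S. anc E (vs ! i) s))))"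

definition d_separated :: "(nat \<times> nat) set \<Rightarrow> nat \<Rightarrow> nat \<Rightarrow> nat set \<Rightarrow> bool" where
  "d_separated E j k S \<longleftrightarrow> \<not> d_connected E j k S"

definition triples :: "nat \<Rightarrow> (nat \<times> nat \<times> nat set) set" where
  "triples p = {(j, k, S). j \<in> {1..p} \<and> k \<in> {1..p} \<and> j \<noteq> k \<and> S \<subseteq> {1..p} - {j, k}}"

definition Dsep :: "nat \<Rightarrow> (nat \<times> nat) set \<Rightarrow> (nat \<times> nat \<times> nat set) set" where
  "Dsep p E = {(j, k, S) \<in> triples p. d_separated E j k S}"

(* A probability distribution of a real random vector (X_1,...,X_p): a probability
   measure on the product space of R^{1..p}; X_j is the j-th coordinate. *)
definition distribution :: "nat \<Rightarrow> (nat \<Rightarrow> real) measure \<Rightarrow> bool" where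
  "distribution p P \<longleftrightarrow> prob_space P \<and> sets P = sets (Pi\<^sub>M {1..p} (\<lambda>_. borel))"

definition sigma_of :: "(nat \<Rightarrow> real) measure \<Rightarrow> nat set \<Rightarrow> (nat \<Rightarrow> real) measure" where
  "sigma_of P S = vimage_algebra (space P) (\<lambda>x. restrict x S) (Pi\<^sub>M S (\<lambda>_. borel))"

definition cond_indep :: "(nat \<Rightarrow> real) measure \<Rightarrow> nat \<Rightarrow> nat \<Rightarrow> nat set \<Rightarrow> bool" where
  "cond_indep P j k S \<longleftrightarrow>
     (\<forall>A \<in> sets borel. \<forall>B \<in> sets borel.
        AE x in P. real_cond_exp P (sigma_of P S)
                      (\<lambda>y. indicator A (y j) * indicator B (y k)) x
                 = real_cond_exp P (sigma_of P S) (\<lambda>y. indicator A (y j)) x *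
                   real_cond_exp P (sigma_of P S) (\<lambda>y. indicator B (y k)) x)"

definition CMC :: "nat \<Rightarrow> (nat \<times> nat) set \<Rightarrow> (nat \<Rightarrow> real) measure \<Rightarrow> bool" where
  "CMC p E P \<longleftrightarrow> (\<forall>(j, k, S) \<in> Dsep p E. cond_indep P j k S)"

definition markov_equiv :: "nat \<Rightarrow> (nat \<times> nat) set \<Rightarrow> (nat \<times> nat) set \<Rightarrow> bool" where
  "markov_equiv p E E' \<longleftrightarrow> (\<forall>P. distribution p P \<longrightarrow> (CMC p E P \<longleftrightarrow> CMC p E' P))"

definition CFC :: "nat \<Rightarrow> (nat \<times> nat) set \<Rightarrow> (nat \<Rightarrow> real) measure \<Rightarrow> bool" where
  "CFC p E P \<longleftrightarrow> (\<forall>(j, k, S) \<in> triples p. d_separated E j k S \<longleftrightarrow> cond_indep P j k S)"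

definition identifiable_SMR :: "nat \<Rightarrow> (nat \<times> nat) set \<Rightarrow> (nat \<Rightarrow> real) measure \<Rightarrow> bool" where
  "identifiable_SMR p E P \<longleftrightarrow> CMC p E P \<and>
     (\<forall>G. dcg p G \<and> CMC p G P \<and> \<not> markov_equiv p G E \<longrightarrow>
          card (skeleton E) < card (skeleton G))"

definition weak_SMR :: "nat \<Rightarrow> (nat \<times> nat) set \<Rightarrow> (nat \<Rightarrow> real) measure \<Rightarrow> bool" where
  "weak_SMR p E P \<longleftrightarrow> CMC p E P \<and>
     (\<forall>G. dcg p G \<and> CMC p G P \<and> \<not> markov_equiv p G E \<longrightarrow>
          card (skeleton E) \<le> card (skeleton G))"

definition P_minimal :: "nat \<Rightarrow> (nat \<times> nat) set \<Rightarrow> (nat \<Rightarrow> real) measure \<Rightarrow> bool" where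
  "P_minimal p E P \<longleftrightarrow> CMC p E P \<and>
     \<not> (\<exists>G. dcg p G \<and> CMC p G P \<and> \<not> markov_equiv p G E \<and> Dsep p E \<subset> Dsep p G)"

end

theory Submission
  imports Defs
begin

text \<open>Under the CFC the d-separations of \<open>G\<^sup>*\<close> are exactly the conditional independences
  of \<open>P\<close>, so every DCG \<open>G\<close> satisfying the CMC has \<open>Dsep G \<subseteq> Dsep G\<^sup>*\<close>.
  A pair in the skeleton of \<open>G\<^sup>*\<close> is d-connected given every set, whereas a pair outside the
  skeleton of \<open>G\<close> is d-separated given all its other ancestors; hence the skeleton of \<open>G\<^sup>*\<close> is
  contained in that of \<open>G\<close>. This gives (a), and (c) because a strictly larger \<open>Dsep G\<close> would
  give \<open>G\<close> a skeleton no larger than that of \<open>G\<^sup>*\<close>.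
  For (b) and (d) take the graphs with edges \<open>1 \<rightarrow> 4, 2 \<rightarrow> 3, 3 \<rightarrow> 4, 4 \<rightarrow> 3\<close> and
  \<open>1 \<rightarrow> 4, 2 \<rightarrow> 3, 3 \<rightarrow> 4, 4 \<rightarrow> 2\<close>. They have the same skeleton, the second has strictly
  fewer d-separations, the uniform distribution on six binary vectors is faithful to the first,
  and the distribution of the two constant vectors satisfies the CMC for the second graph but
  not for the first.\<close>

section \<open>d-separation and the skeleton\<close>

definition active_path :: "(nat \<times> nat) set \<Rightarrow> nat set \<Rightarrow> nat list \<Rightarrow> bool list \<Rightarrow> bool" where
  "active_path E S vs ds \<longleftrightarrow>
     (\<forall>i. 0 < i \<and> i < length ds \<longrightarrow>
        (vs ! i \<in> S \<longrightarrow> collider_at ds i) \<and> (collider_at ds i \<longrightarrow> (\<exists>s\<in>S. anc E (vs ! i) s)))"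

lemma d_connected_iff_active_path:
  "d_connected E j k S \<longleftrightarrow> (\<exists>vs ds. is_path E j k vs ds \<and> active_path E S vs ds)"
  unfolding d_connected_def active_path_def ..

lemma is_path_length: "is_path E j k vs ds \<Longrightarrow> length vs = Suc (length ds)"
  unfolding is_path_def by simp

lemma is_path_first: "is_path E j k vs ds \<Longrightarrow> vs ! 0 = j"
  unfolding is_path_def by (metis hd_conv_nth)

lemma is_path_last: "is_path E j k vs ds \<Longrightarrow> vs ! length ds = k"
  unfolding is_path_def by (metis add_diff_cancel_right' last_conv_nth)

lemma is_path_edge:
  "is_path E j k vs ds \<Longrightarrow> i < length ds \<Longrightarrow>
     (if ds ! i then (vs ! i, vs ! Suc i) \<in> E else (vs ! Suc i, vs ! i) \<in> E)"
  unfolding is_path_def by blast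

lemma is_path_rev:
  assumes "is_path E j k vs ds"
  shows "is_path E k j (rev vs) (rev (map Not ds))"
proof -
  let ?n = "length ds"
  have len: "length vs = Suc ?n" using assms by (rule is_path_length)
  have "if \<not> ds ! (?n - Suc i) then (vs ! (?n - i), vs ! (?n - Suc i)) \<in> E
        else (vs ! (?n - Suc i), vs ! (?n - i)) \<in> E" if "i < ?n" for i
    using is_path_edge[OF assms, of "?n - Suc i"] that by (auto simp: Suc_diff_Suc)
  then show ?thesis
    using assms len unfolding is_path_def
    by (auto simp: rev_nth hd_rev last_rev Suc_diff_Suc)
qed

lemma collider_at_rev:
  assumes "0 < i" "i < length ds"
  shows "collider_at (rev (map Not ds)) i \<longleftrightarrow> collider_at ds (length ds - i)"
  using assms by (auto simp: collider_at_def rev_nth Suc_diff_Suc diff_diff_left)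

lemma active_path_rev:
  assumes "length vs = Suc (length ds)" "active_path E S vs ds"
  shows "active_path E S (rev vs) (rev (map Not ds))"
  unfolding active_path_def
proof (intro allI impI)
  fix i assume i: "0 < i \<and> i < length (rev (map Not ds))"
  then have "0 < length ds - i \<and> length ds - i < length ds" by auto
  with assms(2) have "(vs ! (length ds - i) \<in> S \<longrightarrow> collider_at ds (length ds - i)) \<and>
      (collider_at ds (length ds - i) \<longrightarrow> (\<exists>s\<in>S. anc E (vs ! (length ds - i)) s))"
    unfolding active_path_def by blast
  then show "(rev vs ! i \<in> S \<longrightarrow> collider_at (rev (map Not ds)) i) \<and>
      (collider_at (rev (map Not ds)) i \<longrightarrow> (\<exists>s\<in>S. anc E (rev vs ! i) s))"
    using i assms(1) by (simp add: collider_at_rev rev_nth)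
qed

lemma d_connected_sym: "d_connected E j k S \<Longrightarrow> d_connected E k j S"
  unfolding d_connected_iff_active_path
  by (metis is_path_rev active_path_rev is_path_length)

lemma d_separated_sym: "d_separated E j k S \<Longrightarrow> d_separated E k j S"
  unfolding d_separated_def using d_connected_sym by blast

definition directed_path :: "(nat \<times> nat) set \<Rightarrow> nat list \<Rightarrow> bool" where
  "directed_path E ws \<longleftrightarrow>
     ws \<noteq> [] \<and> distinct ws \<and> (\<forall>i. Suc i < length ws \<longrightarrow> (ws ! i, ws ! Suc i) \<in> E)"

lemma directed_path_take: "directed_path E ws \<Longrightarrow> 0 < n \<Longrightarrow> directed_path E (take n ws)"
  unfolding directed_path_def by auto

lemma directed_path_take_last:
  assumes "directed_path E ws" "i < length ws"
  shows "directed_path E (take (Suc i) ws) \<and> hd (take (Suc i) ws) = hd ws \<and>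
         last (take (Suc i) ws) = ws ! i"
proof (intro conjI)
  show "directed_path E (take (Suc i) ws)" using assms(1) by (rule directed_path_take) simp
  show "hd (take (Suc i) ws) = hd ws" using assms by (cases ws) simp_all
  show "last (take (Suc i) ws) = ws ! i" using assms(2) by (simp add: take_Suc_conv_app_nth)
qed

lemma directed_path_if_rtrancl:
  assumes "(a, b) \<in> E\<^sup>*"
  obtains ws where "directed_path E ws" "hd ws = a" "last ws = b"
  using assms
proof (induction arbitrary: thesis rule: rtrancl_induct)
  case base
  show ?case by (rule base[of "[a]"]) (simp_all add: directed_path_def)
next
  case (step b c)
  obtain ws where ws: "directed_path E ws" "hd ws = a" "last ws = b" by (rule step.IH)
  show ?case
  proof (cases "c \<in> set ws")
    case True
    then obtain i where i: "i < length ws" "ws ! i = c" by (auto simp: in_set_conv_nth)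
    show ?thesis
      using directed_path_take_last[OF ws(1) i(1)] ws(2) i(2)
      by (intro step.prems[of "take (Suc i) ws"]) simp_all
  next
    case False
    have "directed_path E (ws @ [c])"
      using ws False step.hyps(2) unfolding directed_path_def
      by (auto simp: nth_append last_conv_nth less_Suc_eq) (metis diff_Suc_Suc minus_nat.diff_0)
    then show ?thesis using ws by (intro step.prems[of "ws @ [c]"]) (auto simp: directed_path_def)
  qed
qed

lemma rtrancl_if_directed_path:
  assumes "directed_path E ws" "i < length ws"
  shows "(hd ws, ws ! i) \<in> E\<^sup>*"
  using assms(2)
proof (induction i)
  case 0
  then show ?case using assms(1) by (simp add: directed_path_def hd_conv_nth)
next
  case (Suc i)
  then have "(ws ! i, ws ! Suc i) \<in> E" using assms(1) by (simp add: directed_path_def)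
  with Suc show ?case by (meson Suc_lessD rtrancl.rtrancl_into_rtrancl)
qed

text \<open>The path \<open>u \<rightarrow> l \<rightarrow> \<dots> \<rightarrow> t\<close> has no colliders, and \<open>unblocked\<close> keeps its
  vertices out of \<open>S\<close>.\<close>

lemma d_connected_edge_directed_path:
  assumes ul: "(u, l) \<in> E" and ws: "directed_path E ws" "hd ws = l" "last ws = t"
    and u: "u \<notin> set ws" and unblocked: "\<forall>s\<in>S. \<not> anc E l s"
  shows "d_connected E u t S"
  unfolding d_connected_iff_active_path
proof (intro exI conjI)
  let ?vs = "u # ws" and ?ds = "replicate (length ws) True"
  have ne: "ws \<noteq> []" and dist: "distinct ws" using ws by (simp_all add: directed_path_def)
  have edge: "(?vs ! i, ?vs ! Suc i) \<in> E" if "i < length ws" for i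
  proof (cases i)
    case 0
    then show ?thesis using ul ws(2) ne by (simp add: hd_conv_nth)
  next
    case (Suc i')
    then show ?thesis using ws(1) that by (simp add: directed_path_def)
  qed
  show "is_path E u t ?vs ?ds"
    unfolding is_path_def using ne dist u ws(3) edge by simp
  have "?vs ! Suc i \<notin> S" if "i < length ws" for i
    using rtrancl_if_directed_path[OF ws(1) that] ws(2) unblocked by (auto simp: anc_def)
  then show "active_path E S ?vs ?ds"
    unfolding active_path_def collider_at_def by (auto simp: gr0_conv_Suc)
qed

lemma d_connected_if_common_child:
  assumes ul: "(u, l) \<in> E" and tl: "(t, l) \<in> E" and "u \<noteq> t" and "anc E l t"
    and unblocked: "\<forall>s\<in>S. \<not> anc E l s"
  shows "d_connected E u t S"
proof -
  obtain ws where ws: "directed_path E ws" "hd ws = l" "last ws = t"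
    using \<open>anc E l t\<close> directed_path_if_rtrancl unfolding anc_def by blast
  show ?thesis
  proof (cases "u \<in> set ws")
    case False
    show ?thesis using d_connected_edge_directed_path[OF ul ws False unblocked] .
  next
    case True
    text \<open>Then the directed path from \<open>l\<close> reaches \<open>u\<close> before \<open>t\<close>, and we go from \<open>t\<close> instead.\<close>
    then obtain i where i: "i < length ws" "ws ! i = u" by (auto simp: in_set_conv_nth)
    have dist: "distinct ws" and last: "ws ! (length ws - 1) = t"
      using ws by (auto simp: directed_path_def last_conv_nth)
    with i \<open>u \<noteq> t\<close> have "Suc i < length ws" by (metis Suc_lessI diff_Suc_1)
    with dist last have "t \<notin> set (take (Suc i) ws)"
      by (auto simp: in_set_conv_nth nth_eq_iff_index_eq)
    moreover have "directed_path E (take (Suc i) ws)" "hd (take (Suc i) ws) = l"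
      "last (take (Suc i) ws) = u"
      using directed_path_take_last[OF ws(1) i(1)] ws(2) i(2) by simp_all
    ultimately have "d_connected E t u S"
      using d_connected_edge_directed_path[OF tl _ _ _ _ unblocked] by blast
    then show ?thesis by (rule d_connected_sym)
  qed
qed

lemma d_connected_if_skeleton:
  assumes E: "dcg p E" and jk: "(j, k) \<in> skeleton E"
  shows "d_connected E j k S"
proof (cases "really_adj E j k")
  case True
  then have "is_path E j k [j, k] [(j, k) \<in> E]"
    using jk by (auto simp: is_path_def really_adj_def skeleton_def)
  then show ?thesis unfolding d_connected_iff_active_path active_path_def by force
next
  case False
  then obtain l where l: "(j, l) \<in> E" "(k, l) \<in> E" "anc E l j \<or> anc E l k"
    using jk by (auto simp: skeleton_def virtually_adj_def)
  have "j \<noteq> k" using jk by (simp add: skeleton_def)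
  show ?thesis
  proof (cases "\<exists>s\<in>S. anc E l s")
    case True
    have "l \<noteq> j" "l \<noteq> k" using l E by (auto simp: dcg_def)
    then have "is_path E j k [j, l, k] [True, False]"
      using l \<open>j \<noteq> k\<close> by (auto simp: is_path_def nth_Cons split: nat.splits)
    moreover have "active_path E S [j, l, k] [True, False]"
      using True by (auto simp: active_path_def collider_at_def less_Suc_eq)
    ultimately show ?thesis unfolding d_connected_iff_active_path by blast
  next
    case False
    then have unblocked: "\<forall>s\<in>S. \<not> anc E l s" by blast
    from l(3) show ?thesis
    proof
      assume "anc E l j"
      then show ?thesis
        using d_connected_if_common_child[OF l(2) l(1) _ _ unblocked] \<open>j \<noteq> k\<close> d_connected_sym
        by blast
    next
      assume "anc E l k"
      show ?thesis using d_connected_if_common_child[OF l(1) l(2) \<open>j \<noteq> k\<close> \<open>anc E l k\<close> unblocked] .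
    qed
  qed
qed

lemma anc_if_edge: "(a, b) \<in> E \<Longrightarrow> anc E a b"
  unfolding anc_def by simp

lemma anc_parentless: "anc E v j \<Longrightarrow> \<forall>u. (u, j) \<notin> E \<Longrightarrow> v = j"
  unfolding anc_def by (erule rtranclE) auto

context
  fixes E :: "(nat \<times> nat) set" and S A :: "nat set" and vs :: "nat list" and ds :: "bool list"
    and j k :: nat
  assumes path: "is_path E j k vs ds" and active: "active_path E S vs ds"
    and j_in: "j \<in> A" and k_in: "k \<in> A" and S_sub: "S \<subseteq> A"
    and ancestral: "\<And>a b. anc E a b \<Longrightarrow> b \<in> A \<Longrightarrow> a \<in> A"
begin

lemma active_path_collider_in_ancestral:
  assumes "0 < i" "i < length ds" "collider_at ds i"
  shows "vs ! i \<in> A"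
  using active assms S_sub ancestral unfolding active_path_def by blast

lemma active_path_forward_in_ancestral:
  assumes "i < length ds" "ds ! i"
  shows "vs ! Suc i \<in> A"
proof -
  have "i < length ds \<longrightarrow> ds ! i \<longrightarrow> vs ! Suc i \<in> A" if "i \<le> length ds" for i
    using that
  proof (induction rule: inc_induct)
    case base
    then show ?case by simp
  next
    case (step m)
    show ?case
    proof (intro impI)
      assume "ds ! m"
      consider "Suc m = length ds" | "Suc m < length ds" "collider_at ds (Suc m)"
        | "Suc m < length ds" "ds ! Suc m"
        using step.hyps \<open>ds ! m\<close> by (cases "Suc m < length ds") (auto simp: collider_at_def)
      then show "vs ! Suc m \<in> A"
      proof cases
        case 1
        then show ?thesis using is_path_last[OF path] k_in by simp
      next
        case 2
        then show ?thesis using active_path_collider_in_ancestral step.hyps by simp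
      next
        case 3
        then have "(vs ! Suc m, vs ! Suc (Suc m)) \<in> E"
          using is_path_edge[OF path, of "Suc m"] by simp
        then show ?thesis using step.IH 3 ancestral anc_if_edge by blast
      qed
    qed
  qed
  then show ?thesis using assms by simp
qed

lemma active_path_backward_in_ancestral:
  assumes "i < length ds" "\<not> ds ! i"
  shows "vs ! i \<in> A"
  using assms
proof (induction i)
  case 0
  then show ?case using is_path_first[OF path] j_in by simp
next
  case (Suc i)
  show ?case
  proof (cases "collider_at ds (Suc i)")
    case True
    then show ?thesis using active_path_collider_in_ancestral Suc.prems by simp
  next
    case False
    then have "\<not> ds ! i" using Suc.prems by (simp add: collider_at_def)
    moreover have "i < length ds" using Suc.prems by simp
    ultimately have "vs ! i \<in> A" "(vs ! Suc i, vs ! i) \<in> E"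
      using Suc.IH is_path_edge[OF path, of i] by simp_all
    then show ?thesis using ancestral anc_if_edge by blast
  qed
qed

lemma active_path_in_ancestral:
  assumes "i \<le> length ds"
  shows "vs ! i \<in> A"
proof (cases "i = length ds")
  case True
  then show ?thesis using is_path_last[OF path] k_in by simp
next
  case False
  then have i: "i < length ds" using assms by simp
  show ?thesis
  proof (cases "ds ! i")
    case True
    then have "vs ! Suc i \<in> A" "(vs ! i, vs ! Suc i) \<in> E"
      using active_path_forward_in_ancestral[OF i] is_path_edge[OF path i] by simp_all
    then show ?thesis using ancestral anc_if_edge by blast
  next
    case False
    then show ?thesis using active_path_backward_in_ancestral[OF i] by simp
  qed
qed

end

text \<open>Conditioning on all other ancestors of \<open>j\<close> and \<open>k\<close> forces every interior vertex of an
  active path to be a collider, so the path has at most two edges.\<close>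

lemma d_separated_by_ancestors:
  assumes "j \<noteq> k" "\<not> really_adj E j k" "\<not> virtually_adj E j k"
  shows "d_separated E j k ({v. anc E v j \<or> anc E v k} - {j, k})"
  unfolding d_separated_def d_connected_iff_active_path
proof clarify
  define A where "A = {v. anc E v j \<or> anc E v k}"
  fix vs ds
  assume path: "is_path E j k vs ds" and active: "active_path E (A - {j, k}) vs ds"
  let ?n = "length ds"
  have ancestral: "a \<in> A" if "anc E a b" "b \<in> A" for a b
    using that by (auto simp: A_def anc_def dest: rtrancl_trans)
  have in_A: "vs ! i \<in> A" if "i \<le> ?n" for i
    using active_path_in_ancestral[OF path active _ _ _ ancestral that]
    by (auto simp: A_def anc_def)
  have first: "vs ! 0 = j" and last: "vs ! ?n = k" and len: "length vs = Suc ?n"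
    using path by (simp_all add: is_path_first is_path_last is_path_length)
  have dist: "distinct vs" using path by (simp add: is_path_def)
  have collider: "collider_at ds i" if "0 < i" "i < ?n" for i
  proof -
    have "vs ! i \<noteq> j" "vs ! i \<noteq> k"
      using that first last len nth_eq_iff_index_eq[OF dist, of i 0]
        nth_eq_iff_index_eq[OF dist, of i ?n]
      by auto
    then show ?thesis using active in_A that unfolding active_path_def by simp
  qed
  consider "?n = 0" | "?n = 1" | "?n = 2" | "?n \<ge> 3" by linarith
  then show False
  proof cases
    case 1
    then show False using first last \<open>j \<noteq> k\<close> by simp
  next
    case 2
    then show False
      using is_path_edge[OF path, of 0] first last assms(2)
      by (auto simp: really_adj_def split: if_splits)
  next
    case 3
    then have "collider_at ds 1" using collider by simp
    then have "(j, vs ! 1) \<in> E" "(k, vs ! 1) \<in> E"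
      using is_path_edge[OF path, of 0] is_path_edge[OF path, of 1] first last 3
      by (auto simp: collider_at_def numeral_2_eq_2)
    moreover have "vs ! 1 \<in> A" using in_A 3 by simp
    ultimately show False using assms(3) unfolding virtually_adj_def A_def by blast
  next
    case 4
    then have "collider_at ds 1" "collider_at ds 2" using collider by auto
    then show False by (simp add: collider_at_def)
  qed
qed

lemma skeleton_subset: "dcg p E \<Longrightarrow> skeleton E \<subseteq> {1..p} \<times> {1..p}"
  unfolding skeleton_def dcg_def really_adj_def virtually_adj_def by blast

lemma ancestors_subset_vertices:
  assumes "dcg p E"
  shows "{v. anc E v j \<or> anc E v k} - {j, k} \<subseteq> {1..p} - {j, k}"
proof
  fix v assume v: "v \<in> {v. anc E v j \<or> anc E v k} - {j, k}"
  then have "\<exists>w. (v, w) \<in> E" by (auto simp: anc_def elim: converse_rtranclE)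
  then show "v \<in> {1..p} - {j, k}" using assms v by (auto simp: dcg_def)
qed

lemma skeleton_mono_Dsep:
  assumes E: "dcg p E" and G: "dcg p G" and Dsep: "Dsep p G \<subseteq> Dsep p E"
  shows "skeleton E \<subseteq> skeleton G"
proof (clarify, rule ccontr)
  fix j k assume jk: "(j, k) \<in> skeleton E" and "(j, k) \<notin> skeleton G"
  then have "j < k" "\<not> really_adj G j k" "\<not> virtually_adj G j k" by (auto simp: skeleton_def)
  then have "d_separated G j k ({v. anc G v j \<or> anc G v k} - {j, k})"
    by (intro d_separated_by_ancestors) simp_all
  moreover have "j \<in> {1..p}" "k \<in> {1..p}" using skeleton_subset[OF E] jk by auto
  ultimately have "(j, k, {v. anc G v j \<or> anc G v k} - {j, k}) \<in> Dsep p G"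
    using ancestors_subset_vertices[OF G] \<open>j < k\<close> by (auto simp: Dsep_def triples_def)
  with Dsep show False
    using d_connected_if_skeleton[OF E jk] by (auto simp: Dsep_def d_separated_def)
qed

lemma card_skeleton_mono_Dsep:
  assumes "dcg p E" "dcg p G" "Dsep p G \<subseteq> Dsep p E"
  shows "card (skeleton E) \<le> card (skeleton G)"
  using skeleton_mono_Dsep[OF assms] skeleton_subset[OF assms(2)]
  by (intro card_mono) (auto intro: finite_subset)

lemma markov_equiv_sym: "markov_equiv p E G \<longleftrightarrow> markov_equiv p G E"
  unfolding markov_equiv_def by blast

lemma Dsep_not_skeleton:
  assumes "dcg p E" "(j, k, S) \<in> Dsep p E"
  shows "(j, k) \<notin> skeleton E" "(k, j) \<notin> skeleton E"
  using assms d_connected_if_skeleton d_connected_sym by (fastforce simp: Dsep_def d_separated_def)+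

lemma d_separated_iff_Dsep: "(j, k, S) \<in> triples p \<Longrightarrow> d_separated E j k S \<longleftrightarrow> (j, k, S) \<in> Dsep p E"
  by (simp add: Dsep_def)

lemma triples_swap: "(j, k, S) \<in> triples p \<Longrightarrow> (k, j, S) \<in> triples p"
  by (auto simp: triples_def)

lemma d_connectedI:
  assumes "vs \<noteq> []" "hd vs = j" "last vs = k" "distinct vs" "length ds + 1 = length vs"
    and "\<forall>i\<in>set [0..<length ds].
      if ds ! i then (vs ! i, vs ! Suc i) \<in> E else (vs ! Suc i, vs ! i) \<in> E"
    and "\<forall>i\<in>set [1..<length ds]. (vs ! i \<in> S \<longrightarrow> collider_at ds i) \<and>
      (collider_at ds i \<longrightarrow> (\<exists>s\<in>S. anc E (vs ! i) s))"
  shows "d_connected E j k S"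
  using assms unfolding d_connected_def is_path_def by (intro exI[of _ vs] exI[of _ ds]) auto

lemma CMC_if_CFC: "CFC p E P \<Longrightarrow> CMC p E P"
  unfolding CFC_def CMC_def Dsep_def by auto

lemma Dsep_subset_if_CFC_CMC: "CFC p E P \<Longrightarrow> CMC p G P \<Longrightarrow> Dsep p G \<subseteq> Dsep p E"
  unfolding CFC_def CMC_def Dsep_def by auto

lemma weak_SMR_if_CFC: "dcg p E \<Longrightarrow> CFC p E P \<Longrightarrow> weak_SMR p E P"
  unfolding weak_SMR_def
  using CMC_if_CFC Dsep_subset_if_CFC_CMC card_skeleton_mono_Dsep by blast

lemma P_minimal_if_identifiable_SMR:
  assumes E: "dcg p E" and SMR: "identifiable_SMR p E P"
  shows "P_minimal p E P"
  unfolding P_minimal_def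
proof (intro conjI notI)
  show "CMC p E P" using SMR by (simp add: identifiable_SMR_def)
  assume "\<exists>G. dcg p G \<and> CMC p G P \<and> \<not> markov_equiv p G E \<and> Dsep p E \<subset> Dsep p G"
  then obtain G where G: "dcg p G" "CMC p G P" "\<not> markov_equiv p G E" "Dsep p E \<subset> Dsep p G"
    by blast
  then have "card (skeleton E) < card (skeleton G)" using SMR by (simp add: identifiable_SMR_def)
  moreover have "card (skeleton G) \<le> card (skeleton E)"
    using card_skeleton_mono_Dsep[OF G(1) E] G(4) by simp
  ultimately show False by simp
qed

section \<open>Empirical distributions\<close>

lemma cond_indep_sym:
  assumes "cond_indep P j k S"
  shows "cond_indep P k j S"
  unfolding cond_indep_def
proof (intro ballI)
  fix A B :: "real set" assume "A \<in> sets borel" "B \<in> sets borel"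
  with assms have "AE x in P.
      real_cond_exp P (sigma_of P S) (\<lambda>y. indicator B (y j) * indicator A (y k)) x =
      real_cond_exp P (sigma_of P S) (\<lambda>y. indicator B (y j)) x *
      real_cond_exp P (sigma_of P S) (\<lambda>y. indicator A (y k)) x"
    unfolding cond_indep_def by blast
  then show "AE x in P.
      real_cond_exp P (sigma_of P S) (\<lambda>y. indicator A (y k) * indicator B (y j)) x =
      real_cond_exp P (sigma_of P S) (\<lambda>y. indicator A (y k)) x *
      real_cond_exp P (sigma_of P S) (\<lambda>y. indicator B (y j)) x"
    by (rule eventually_mono) (simp add: mult.commute)
qed

lemma sum_fiber_averages:
  fixes f :: "'a \<Rightarrow> 'b" and g :: "'b \<Rightarrow> real" and h :: "'a \<Rightarrow> real"
  assumes "finite I"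
  shows "(\<Sum>n\<in>I. g (f n) * ((\<Sum>m\<in>I. if f m = f n then h m else 0) /
                               (\<Sum>m\<in>I. if f m = f n then 1 else 0)))
       = (\<Sum>m\<in>I. g (f m) * h m)"
proof -
  define c where "c y = (\<Sum>m\<in>I. if f m = y then 1 else 0 :: real)" for y
  have c_pos: "c (f n) > 0" if "n \<in> I" for n
    unfolding c_def using assms that by (intro sum_pos2[of _ n]) auto
  have "(\<Sum>n\<in>I. g (f n) * ((\<Sum>m\<in>I. if f m = f n then h m else 0) / c (f n)))
      = (\<Sum>n\<in>I. \<Sum>m\<in>I. if f n = f m then g (f m) * h m / c (f m) else 0)"
    by (auto simp: sum_distrib_left sum_divide_distrib intro!: sum.cong)
  also have "\<dots> = (\<Sum>m\<in>I. \<Sum>n\<in>I. if f n = f m then g (f m) * h m / c (f m) else 0)"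
    by (rule sum.swap)
  also have "\<dots> = (\<Sum>m\<in>I. g (f m) * h m / c (f m) * c (f m))"
    unfolding c_def sum_distrib_left by (intro sum.cong refl) simp
  also have "\<dots> = (\<Sum>m\<in>I. g (f m) * h m)"
    using c_pos by (intro sum.cong) (auto simp: less_le)
  finally show ?thesis by (simp add: c_def)
qed

text \<open>A table \<open>t\<close> with rows \<open>m < N\<close> describes \<open>N\<close> equally likely \<open>{0,1}\<close>-valued samples.
  An event for a binary variable is determined by whether it contains \<open>0\<close> and \<open>1\<close>, which
  is what the Booleans \<open>a0, a1\<close> (and \<open>b0, b1\<close>) record.\<close>

definition table_count :: "(nat \<Rightarrow> nat \<Rightarrow> bool) \<Rightarrow> nat \<Rightarrow> nat set \<Rightarrow> nat \<Rightarrow> (nat \<Rightarrow> bool) \<Rightarrow> real" where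
  "table_count t N S n \<phi> = (\<Sum>m<N. if (\<forall>i\<in>S. t m i = t n i) \<and> \<phi> m then 1 else 0)"

definition table_cond_indep :: "(nat \<Rightarrow> nat \<Rightarrow> bool) \<Rightarrow> nat \<Rightarrow> nat \<Rightarrow> nat \<Rightarrow> nat set \<Rightarrow> bool" where
  "table_cond_indep t N j k S \<longleftrightarrow> (\<forall>n<N. \<forall>a0 a1 b0 b1.
     let a = (\<lambda>m. if t m j then a1 else a0); b = (\<lambda>m. if t m k then b1 else b0) in
     table_count t N S n (\<lambda>m. a m \<and> b m) * table_count t N S n (\<lambda>_. True) =
     table_count t N S n a * table_count t N S n b)"

lemma table_count_pos: "n < N \<Longrightarrow> table_count t N S n (\<lambda>_. True) > 0"
  unfolding table_count_def by (rule sum_pos2[of _ n]) auto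

locale empirical_distribution =
  fixes V :: "nat set" and N :: nat and x :: "nat \<Rightarrow> nat \<Rightarrow> real"
  assumes finite_V: "finite V" and N_pos: "0 < N"
    and sample_space: "\<And>m. x m \<in> space (Pi\<^sub>M V (\<lambda>_. (borel :: real measure)))"
begin

abbreviation "M \<equiv> Pi\<^sub>M V (\<lambda>_. (borel :: real measure))"
abbreviation "uniform \<equiv> measure_pmf (pmf_of_set {..<N})"

definition empirical :: "(nat \<Rightarrow> real) measure" where
  "empirical = distr uniform M x"

lemma samples_nonempty: "{..<N} \<noteq> {}"
  using N_pos by auto

lemma x_measurable[measurable]: "x \<in> measurable uniform M"
  unfolding measurable_pmf_measure1 using sample_space by blast

lemma sets_empirical[simp, measurable_cong]: "sets empirical = sets M"
  by (simp add: empirical_def)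

lemma space_empirical[simp]: "space empirical = space M"
  by (simp add: empirical_def)

lemma prob_space_empirical: "prob_space empirical"
  unfolding empirical_def
  by (rule prob_space.prob_space_distr[OF prob_space_measure_pmf x_measurable])

lemma distribution_empirical:
  assumes "V = {1..p}"
  shows "distribution p empirical"
  unfolding distribution_def using prob_space_empirical sets_empirical assms by auto

lemma integral_empirical:
  assumes [measurable]: "f \<in> borel_measurable M"
  shows "integral\<^sup>L empirical f = (\<Sum>m<N. f (x m)) / N"
  unfolding empirical_def integral_distr[OF x_measurable assms]
  by (simp add: integral_pmf_of_set[OF samples_nonempty])

lemma integrable_empirical:
  assumes [measurable]: "f \<in> borel_measurable M"
  shows "integrable empirical (f :: _ \<Rightarrow> real)"
  unfolding empirical_def
  by (subst integrable_distr_eq[OF x_measurable assms])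
    (auto intro!: integrable_measure_pmf_finite simp: set_pmf_of_set[OF samples_nonempty])

lemma AE_empirical_iff:
  assumes "{z \<in> space M. P z} \<in> sets M"
  shows "(AE z in empirical. P z) \<longleftrightarrow> (\<forall>n<N. P (x n))"
  unfolding empirical_def
  by (subst AE_distr_iff[OF x_measurable assms])
    (auto simp: AE_measure_pmf_iff set_pmf_of_set[OF samples_nonempty])

context
  fixes S :: "nat set"
  assumes S_sub: "S \<subseteq> V"
begin

abbreviation "M\<^sub>S \<equiv> Pi\<^sub>M S (\<lambda>_. (borel :: real measure))"

lemma restrict_measurable[measurable]: "(\<lambda>z. restrict z S) \<in> measurable M M\<^sub>S"
  using measurable_restrict_subset[OF S_sub] .

lemma restrict_space: "(\<lambda>z. restrict z S) \<in> space M \<rightarrow> space M\<^sub>S"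
  using measurable_space[OF restrict_measurable] by blast

lemma sets_sigma_of:
  "sets (sigma_of empirical S) = {(\<lambda>z. restrict z S) -` D \<inter> space M | D. D \<in> sets M\<^sub>S}"
  unfolding sigma_of_def space_empirical by (rule sets_vimage_algebra2[OF restrict_space])

lemma subalgebra_sigma_of: "subalgebra empirical (sigma_of empirical S)"
  unfolding subalgebra_def
proof
  show "sets (sigma_of empirical S) \<subseteq> sets empirical"
    unfolding sets_sigma_of sets_empirical using restrict_measurable by (auto simp: measurable_sets)
  show "space (sigma_of empirical S) = space empirical" by (simp add: sigma_of_def)
qed

lemma sigma_finite_subalgebra_sigma_of: "sigma_finite_subalgebra empirical (sigma_of empirical S)"
proof -
  interpret prob_space empirical by (rule prob_space_empirical)
  have "finite_measure_subalgebra empirical (sigma_of empirical S)"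
    by unfold_locales (rule subalgebra_sigma_of)
  then show ?thesis by (rule finite_measure_subalgebra_is_sigma_finite)
qed

definition cell_mean :: "((nat \<Rightarrow> real) \<Rightarrow> real) \<Rightarrow> (nat \<Rightarrow> real) \<Rightarrow> real" where
  "cell_mean h y = (\<Sum>m<N. if restrict (x m) S = y then h (x m) else 0) /
                   (\<Sum>m<N. if restrict (x m) S = y then 1 else 0)"

lemma cell_mean_measurable: "cell_mean h \<in> borel_measurable M\<^sub>S"
proof -
  have singleton: "{restrict (x m) S} \<in> sets M\<^sub>S" for m
  proof -
    have "restrict (x m) S \<in> extensional S" by simp
    then have "{restrict (x m) S} = PiE S (\<lambda>i. {x m i})" using PiE_singleton by fastforce
    also have "\<dots> \<in> sets M\<^sub>S"
      using finite_subset[OF S_sub finite_V] by (intro sets_PiM_I_finite) auto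
    finally show ?thesis .
  qed
  have "cell_mean h = (\<lambda>y. (\<Sum>m<N. h (x m) * indicator {restrict (x m) S} y) /
                            (\<Sum>m<N. indicator {restrict (x m) S} y))"
    unfolding cell_mean_def
    by (intro ext arg_cong2[where f="(/)"] sum.cong refl) (auto simp: indicator_def)
  also have "\<dots> \<in> borel_measurable M\<^sub>S"
    using singleton by measurable
  finally show ?thesis .
qed

lemma cell_mean_restrict_measurable:
  "(\<lambda>z. cell_mean h (restrict z S)) \<in> borel_measurable (sigma_of empirical S)"
  unfolding sigma_of_def space_empirical
  by (rule measurable_comp[OF measurable_vimage_algebra1[OF restrict_space] cell_mean_measurable,
        unfolded comp_def])

lemma cell_mean_restrict_borel: "(\<lambda>z. cell_mean h (restrict z S)) \<in> borel_measurable M"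
  using measurable_from_subalg[OF subalgebra_sigma_of cell_mean_restrict_measurable]
  by (simp add: measurable_def)

lemma real_cond_exp_empirical:
  assumes [measurable]: "h \<in> borel_measurable M"
  shows "AE z in empirical.
    real_cond_exp empirical (sigma_of empirical S) h z = cell_mean h (restrict z S)"
proof -
  interpret sigma_finite_subalgebra empirical "sigma_of empirical S"
    by (rule sigma_finite_subalgebra_sigma_of)
  note [measurable] = cell_mean_restrict_borel[of h]
  show ?thesis
  proof (rule real_cond_exp_charact)
    fix A assume "A \<in> sets (sigma_of empirical S)"
    then obtain D where D: "D \<in> sets M\<^sub>S" and A: "A = (\<lambda>z. restrict z S) -` D \<inter> space M"
      unfolding sets_sigma_of by blast
    have [measurable]: "A \<in> sets M" using A D restrict_measurable by (auto simp: measurable_sets)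
    have indicator_A: "indicator A (x m) = indicator D (restrict (x m) S)" for m :: nat
      using sample_space by (simp add: A indicator_def)
    have "(\<integral>z\<in>A. h z \<partial>empirical) = (\<Sum>m<N. indicator D (restrict (x m) S) * h (x m)) / N"
      unfolding set_lebesgue_integral_def by (subst integral_empirical) (auto simp: indicator_A)
    also have "\<dots> = (\<Sum>m<N. indicator D (restrict (x m) S) * cell_mean h (restrict (x m) S)) / N"
      unfolding cell_mean_def by (subst sum_fiber_averages) simp_all
    also have "\<dots> = (\<integral>z\<in>A. cell_mean h (restrict z S) \<partial>empirical)"
      unfolding set_lebesgue_integral_def by (subst integral_empirical) (auto simp: indicator_A)
    finally show "(\<integral>z\<in>A. h z \<partial>empirical) = (\<integral>z\<in>A. cell_mean h (restrict z S) \<partial>empirical)" .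
  qed (auto intro: integrable_empirical cell_mean_restrict_measurable)
qed

lemma AE_cond_exp_product_iff:
  assumes [measurable]: "f \<in> borel_measurable M" "g \<in> borel_measurable M"
    "fg \<in> borel_measurable M"
  shows "(AE z in empirical. real_cond_exp empirical (sigma_of empirical S) fg z =
            real_cond_exp empirical (sigma_of empirical S) f z *
            real_cond_exp empirical (sigma_of empirical S) g z)
    \<longleftrightarrow> (\<forall>n<N. cell_mean fg (restrict (x n) S) =
            cell_mean f (restrict (x n) S) * cell_mean g (restrict (x n) S))"
proof -
  have "AE z in empirical.
      real_cond_exp empirical (sigma_of empirical S) fg z = cell_mean fg (restrict z S) \<and>
      real_cond_exp empirical (sigma_of empirical S) f z = cell_mean f (restrict z S) \<and>
      real_cond_exp empirical (sigma_of empirical S) g z = cell_mean g (restrict z S)"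
    by (intro AE_conjI real_cond_exp_empirical assms)
  then have "(AE z in empirical. real_cond_exp empirical (sigma_of empirical S) fg z =
            real_cond_exp empirical (sigma_of empirical S) f z *
            real_cond_exp empirical (sigma_of empirical S) g z)
    \<longleftrightarrow> (AE z in empirical. cell_mean fg (restrict z S) =
            cell_mean f (restrict z S) * cell_mean g (restrict z S))"
    by (rule eventually_cong) simp
  also have "\<dots> \<longleftrightarrow> (\<forall>n<N. cell_mean fg (restrict (x n) S) =
            cell_mean f (restrict (x n) S) * cell_mean g (restrict (x n) S))"
    by (rule AE_empirical_iff, rule borel_measurable_eq, rule cell_mean_restrict_borel,
        rule borel_measurable_times; rule cell_mean_restrict_borel)
  finally show ?thesis .
qed

lemma cond_indep_empirical_iff:
  assumes "j \<in> V" "k \<in> V"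
  shows "cond_indep empirical j k S \<longleftrightarrow> (\<forall>A\<in>sets borel. \<forall>B\<in>sets borel. \<forall>n<N.
    cell_mean (\<lambda>z. indicator A (z j) * indicator B (z k)) (restrict (x n) S) =
    cell_mean (\<lambda>z. indicator A (z j)) (restrict (x n) S) *
    cell_mean (\<lambda>z. indicator B (z k)) (restrict (x n) S))"
proof -
  have indicator: "(\<lambda>z. indicator A (z i) :: real) \<in> borel_measurable M"
    if "A \<in> sets borel" "i \<in> V" for A i
    by (rule measurable_compose[OF measurable_component_singleton[OF that(2)]
          borel_measurable_indicator[OF that(1)]])
  show ?thesis
    unfolding cond_indep_def
    by (intro ball_cong refl AE_cond_exp_product_iff borel_measurable_times indicator assms)
qed

end

context
  fixes t :: "nat \<Rightarrow> nat \<Rightarrow> bool"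
  assumes x_table: "\<And>m. x m = restrict (\<lambda>i. of_bool (t m i)) V"
begin

lemma cell_mean_table:
  assumes "S \<subseteq> V" and h: "\<And>m. h (x m) = (if \<phi> m then 1 else 0)"
  shows "cell_mean S h (restrict (x n) S) = table_count t N S n \<phi> / table_count t N S n (\<lambda>_. True)"
proof -
  have "restrict (x m) S = restrict (x n) S \<longleftrightarrow> (\<forall>i\<in>S. t m i = t n i)" for m
    using assms(1) by (auto simp: x_table fun_eq_iff restrict_def of_bool_def split: if_splits)
  then show ?thesis
    unfolding cell_mean_def[OF assms(1)] table_count_def
    by (intro arg_cong2[where f = "(/)"] sum.cong) (auto simp: h)
qed

lemma cell_mean_product_iff_table:
  assumes S: "S \<subseteq> V" and j: "j \<in> V" and k: "k \<in> V" and n: "n < N"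
  shows "cell_mean S (\<lambda>z. indicator A (z j) * indicator B (z k)) (restrict (x n) S) =
        cell_mean S (\<lambda>z. indicator A (z j)) (restrict (x n) S) *
        cell_mean S (\<lambda>z. indicator B (z k)) (restrict (x n) S)
    \<longleftrightarrow> table_count t N S n (\<lambda>m. of_bool (t m j) \<in> A \<and> of_bool (t m k) \<in> B) *
        table_count t N S n (\<lambda>_. True) =
        table_count t N S n (\<lambda>m. of_bool (t m j) \<in> A) *
        table_count t N S n (\<lambda>m. of_bool (t m k) \<in> B)"
proof -
  have indicator_x: "indicator A (x m i) = (if of_bool (t m i) \<in> A then 1 else 0 :: real)"
    if "i \<in> V" for A m i
    using that by (simp add: x_table)
  have "cell_mean S (\<lambda>z. indicator A (z j) * indicator B (z k)) (restrict (x n) S) =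
      table_count t N S n (\<lambda>m. of_bool (t m j) \<in> A \<and> of_bool (t m k) \<in> B) /
      table_count t N S n (\<lambda>_. True)"
    "cell_mean S (\<lambda>z. indicator A (z j)) (restrict (x n) S) =
      table_count t N S n (\<lambda>m. of_bool (t m j) \<in> A) / table_count t N S n (\<lambda>_. True)"
    "cell_mean S (\<lambda>z. indicator B (z k)) (restrict (x n) S) =
      table_count t N S n (\<lambda>m. of_bool (t m k) \<in> B) / table_count t N S n (\<lambda>_. True)"
    by (rule cell_mean_table[OF S]; simp add: indicator_x j k)+
  moreover have "a / c = b / c * (d / c) \<longleftrightarrow> a * c = b * d" if "c > 0" for a b c d :: real
    using that by (auto simp: field_simps)
  ultimately show ?thesis using table_count_pos[OF n, of t S] by presburger
qed

lemma cond_indep_empirical_iff_table: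
  assumes S: "S \<subseteq> V" and j: "j \<in> V" and k: "k \<in> V"
  shows "cond_indep empirical j k S \<longleftrightarrow> table_cond_indep t N j k S"
proof -
  define event where
    "event a0 a1 = (if a0 then {0} else {}) \<union> (if a1 then {1} else ({} :: real set))" for a0 a1
  have event: "event a0 a1 \<in> sets borel" "of_bool b \<in> event a0 a1 \<longleftrightarrow> (if b then a1 else a0)"
    for a0 a1 b
    by (auto simp: event_def)
  have of_bool_mem: "of_bool b \<in> A \<longleftrightarrow> (if b then 1 \<in> A else 0 \<in> A)" for b and A :: "real set"
    by (cases b) simp_all
  show ?thesis
    unfolding cond_indep_empirical_iff[OF S j k] table_cond_indep_def Let_def
  proof (intro iffI allI impI ballI)
    fix a0 a1 b0 b1 n
    assume "\<forall>A\<in>sets borel. \<forall>B\<in>sets borel. \<forall>n<N.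
      cell_mean S (\<lambda>z. indicator A (z j) * indicator B (z k)) (restrict (x n) S) =
      cell_mean S (\<lambda>z. indicator A (z j)) (restrict (x n) S) *
      cell_mean S (\<lambda>z. indicator B (z k)) (restrict (x n) S)" and n: "n < N"
    then show "table_count t N S n (\<lambda>m. (if t m j then a1 else a0) \<and> (if t m k then b1 else b0)) *
        table_count t N S n (\<lambda>_. True) =
        table_count t N S n (\<lambda>m. if t m j then a1 else a0) *
        table_count t N S n (\<lambda>m. if t m k then b1 else b0)"
      using cell_mean_product_iff_table[OF S j k n, of "event a0 a1" "event b0 b1"] event
      by (simp only:) blast
  next
    fix A B :: "real set" and n
    assume "\<forall>n<N. \<forall>a0 a1 b0 b1.
      table_count t N S n (\<lambda>m. (if t m j then a1 else a0) \<and> (if t m k then b1 else b0)) *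
      table_count t N S n (\<lambda>_. True) =
      table_count t N S n (\<lambda>m. if t m j then a1 else a0) *
      table_count t N S n (\<lambda>m. if t m k then b1 else b0)" and n: "n < N"
    then show "cell_mean S (\<lambda>z. indicator A (z j) * indicator B (z k)) (restrict (x n) S) =
        cell_mean S (\<lambda>z. indicator A (z j)) (restrict (x n) S) *
        cell_mean S (\<lambda>z. indicator B (z k)) (restrict (x n) S)"
      unfolding cell_mean_product_iff_table[OF S j k n]
      using of_bool_mem[of _ A] of_bool_mem[of _ B] by (simp only:)
  qed
qed

end

end

section \<open>Two graphs with the same skeleton\<close>

lemma subset_doubleton_cases: "S \<subseteq> {a, b} \<Longrightarrow> S = {} \<or> S = {a} \<or> S = {b} \<or> S = {a, b}"
  by blast

lemma Dsep_four_vertices: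
  assumes "dcg 4 E" "skeleton E = {(1, 3), (1, 4), (2, 3), (2, 4), (3, 4)}" "(j, k, S) \<in> Dsep 4 E"
  shows "(j = 1 \<and> k = 2 \<or> j = 2 \<and> k = 1) \<and> (S = {} \<or> S = {3} \<or> S = {4} \<or> S = {3, 4})"
proof -
  have V: "{1..4::nat} = {1, 2, 3, 4}" by auto
  have "j \<in> {1, 2, 3, 4}" "k \<in> {1, 2, 3, 4}" "j \<noteq> k" and S: "S \<subseteq> {1, 2, 3, 4} - {j, k}"
    using assms(3) unfolding Dsep_def triples_def V by blast+
  moreover have "(j, k) \<notin> skeleton E" "(k, j) \<notin> skeleton E"
    using Dsep_not_skeleton[OF assms(1,3)] by simp_all
  ultimately have jk: "j = 1 \<and> k = 2 \<or> j = 2 \<and> k = 1" unfolding assms(2) by auto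
  then have "S \<subseteq> {3, 4}" using S by auto
  with jk show ?thesis using subset_doubleton_cases by blast
qed

lemma triples_4_ordered:
  assumes "(j, k, S) \<in> triples 4" "j < k"
  shows "(j, k, S) \<in> {(1, 2, {}), (1, 2, {3}), (1, 2, {4}), (1, 2, {3, 4}),
    (1, 3, {}), (1, 3, {2}), (1, 3, {4}), (1, 3, {2, 4}),
    (1, 4, {}), (1, 4, {2}), (1, 4, {3}), (1, 4, {2, 3}),
    (2, 3, {}), (2, 3, {1}), (2, 3, {4}), (2, 3, {1, 4}),
    (2, 4, {}), (2, 4, {1}), (2, 4, {3}), (2, 4, {1, 3}),
    (3, 4, {}), (3, 4, {1}), (3, 4, {2}), (3, 4, {1, 2})}"
proof -
  have V: "{1..4::nat} = {1, 2, 3, 4}" by auto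
  have "j \<in> {1, 2, 3, 4}" "k \<in> {1, 2, 3, 4}" and S: "S \<subseteq> {1, 2, 3, 4} - {j, k}"
    using assms(1) unfolding triples_def V by blast+
  with assms(2) have "j = 1 \<and> k = 2 \<or> j = 1 \<and> k = 3 \<or> j = 1 \<and> k = 4 \<or>
      j = 2 \<and> k = 3 \<or> j = 2 \<and> k = 4 \<or> j = 3 \<and> k = 4"
    by auto
  then show ?thesis
    using S by (elim disjE) (auto dest!: subset_doubleton_cases simp: insert_Diff_if)
qed

definition two_cycle_graph :: "(nat \<times> nat) set" where
  "two_cycle_graph = {(1, 4), (2, 3), (3, 4), (4, 3)}"

definition three_cycle_graph :: "(nat \<times> nat) set" where
  "three_cycle_graph = {(1, 4), (2, 3), (3, 4), (4, 2)}"

lemma dcg_two_cycle_graph: "dcg 4 two_cycle_graph"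
  by (auto simp: dcg_def two_cycle_graph_def)

lemma dcg_three_cycle_graph: "dcg 4 three_cycle_graph"
  by (auto simp: dcg_def three_cycle_graph_def)

lemma skeleton_two_cycle_graph:
  "skeleton two_cycle_graph = {(1, 3), (1, 4), (2, 3), (2, 4), (3, 4)}"
proof
  show "skeleton two_cycle_graph \<subseteq> {(1, 3), (1, 4), (2, 3), (2, 4), (3, 4)}"
    by (auto simp: skeleton_def really_adj_def virtually_adj_def two_cycle_graph_def)
  have "(1, 4) \<in> two_cycle_graph" "(2, 3) \<in> two_cycle_graph" "(3, 4) \<in> two_cycle_graph"
    "(4, 3) \<in> two_cycle_graph"
    by (simp_all add: two_cycle_graph_def)
  then have "virtually_adj two_cycle_graph 1 3" "virtually_adj two_cycle_graph 2 4"
    "really_adj two_cycle_graph 1 4" "really_adj two_cycle_graph 2 3"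
    "really_adj two_cycle_graph 3 4"
    unfolding virtually_adj_def really_adj_def anc_def by (blast intro: r_into_rtrancl)+
  then show "{(1, 3), (1, 4), (2, 3), (2, 4), (3, 4)} \<subseteq> skeleton two_cycle_graph"
    by (simp add: skeleton_def)
qed

lemma skeleton_three_cycle_graph:
  "skeleton three_cycle_graph = {(1, 3), (1, 4), (2, 3), (2, 4), (3, 4)}"
proof
  show "skeleton three_cycle_graph \<subseteq> {(1, 3), (1, 4), (2, 3), (2, 4), (3, 4)}"
    by (auto simp: skeleton_def really_adj_def virtually_adj_def three_cycle_graph_def)
  have E: "(1, 4) \<in> three_cycle_graph" "(2, 3) \<in> three_cycle_graph" "(3, 4) \<in> three_cycle_graph"
    "(4, 2) \<in> three_cycle_graph"
    by (simp_all add: three_cycle_graph_def)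
  then have "(4, 3) \<in> three_cycle_graph\<^sup>*" by (blast intro: rtrancl_into_rtrancl r_into_rtrancl)
  with E have "virtually_adj three_cycle_graph 1 3" "really_adj three_cycle_graph 1 4"
    "really_adj three_cycle_graph 2 3" "really_adj three_cycle_graph 2 4"
    "really_adj three_cycle_graph 3 4"
    unfolding virtually_adj_def really_adj_def anc_def by blast+
  then show "{(1, 3), (1, 4), (2, 3), (2, 4), (3, 4)} \<subseteq> skeleton three_cycle_graph"
    by (simp add: skeleton_def)
qed

lemma d_separated_two_cycle_12_empty: "d_separated two_cycle_graph 1 2 {}"
proof -
  have "{v. anc two_cycle_graph v 1 \<or> anc two_cycle_graph v 2} - {1, 2} = {}"
    using anc_parentless[of two_cycle_graph _ 1] anc_parentless[of two_cycle_graph _ 2]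
    by (auto simp: two_cycle_graph_def)
  moreover have "d_separated two_cycle_graph 1 2
      ({v. anc two_cycle_graph v 1 \<or> anc two_cycle_graph v 2} - {1, 2})"
    by (rule d_separated_by_ancestors)
      (auto simp: two_cycle_graph_def really_adj_def virtually_adj_def)
  ultimately show ?thesis by (simp only:)
qed

text \<open>The only edge at \<open>1\<close> leads into \<open>4 \<in> S\<close>, which must be a collider; so the path continues
  backwards along \<open>3 \<rightarrow> 4\<close>, and then \<open>3 \<in> S\<close> is a non-collider.\<close>

lemma d_separated_two_cycle_12_34: "d_separated two_cycle_graph 1 2 {3, 4}"
  unfolding d_separated_def d_connected_iff_active_path
proof clarify
  fix vs ds
  assume path: "is_path two_cycle_graph 1 2 vs ds"
    and active: "active_path two_cycle_graph {3, 4} vs ds"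
  have first: "vs ! 0 = 1" and last: "vs ! length ds = 2" and len: "length vs = Suc (length ds)"
    using is_path_first[OF path] is_path_last[OF path] is_path_length[OF path] by simp_all
  have dist: "distinct vs" using path unfolding is_path_def by blast
  have ds0: "0 < length ds" using first last by (cases "length ds") simp_all
  have "vs ! 1 = 4"
    using is_path_edge[OF path ds0] first by (cases "ds ! 0") (auto simp: two_cycle_graph_def)
  then have "length ds \<noteq> 1" using last by auto
  with ds0 have ds1: "1 < length ds" by linarith
  have "collider_at ds 1"
    using active ds1 \<open>vs ! 1 = 4\<close> unfolding active_path_def by simp
  then have "\<not> ds ! 1" by (simp add: collider_at_def)
  then have "(vs ! 2, 4) \<in> two_cycle_graph"
    using is_path_edge[OF path ds1] \<open>vs ! 1 = 4\<close> by (simp add: numeral_2_eq_2)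
  moreover have "vs ! 2 \<noteq> vs ! 0"
    using nth_eq_iff_index_eq[OF dist, of 2 0] ds1 len by simp
  ultimately have "vs ! 2 = 3" using first by (auto simp: two_cycle_graph_def)
  then have "length ds \<noteq> 2" using last by auto
  with ds1 have ds2: "2 < length ds" by linarith
  have "collider_at ds 2"
    using active ds2 \<open>vs ! 2 = 3\<close> unfolding active_path_def by simp
  then show False using \<open>\<not> ds ! 1\<close> by (simp add: collider_at_def)
qed

lemma d_separated_three_cycle_12_34: "d_separated three_cycle_graph 1 2 {3, 4}"
proof -
  have "(3, 2) \<in> three_cycle_graph\<^sup>*" "(4, 2) \<in> three_cycle_graph\<^sup>*"
    by (auto intro: rtrancl_into_rtrancl[of _ 4] simp: three_cycle_graph_def)
  moreover have "{1..4} - {1, 2} = {3, 4::nat}" by auto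
  ultimately have "{v. anc three_cycle_graph v 1 \<or> anc three_cycle_graph v 2} - {1, 2} = {3, 4}"
    using ancestors_subset_vertices[OF dcg_three_cycle_graph, of 1 2] by (auto simp: anc_def)
  moreover have "d_separated three_cycle_graph 1 2
      ({v. anc three_cycle_graph v 1 \<or> anc three_cycle_graph v 2} - {1, 2})"
    by (rule d_separated_by_ancestors)
      (auto simp: three_cycle_graph_def really_adj_def virtually_adj_def)
  ultimately show ?thesis by (simp only:)
qed

lemma Dsep_two_cycle_graph:
  "Dsep 4 two_cycle_graph = {(1, 2, {}), (2, 1, {}), (1, 2, {3, 4}), (2, 1, {3, 4})}"
proof
  have "d_connected two_cycle_graph 1 2 {3}"
    by (rule d_connectedI[where vs = "[1, 4, 3, 2]" and ds = "[True, True, False]"])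
      (simp_all add: two_cycle_graph_def collider_at_def anc_def)
  moreover have "d_connected two_cycle_graph 1 2 {4}"
    by (rule d_connectedI[where vs = "[1, 4, 3, 2]" and ds = "[True, False, False]"])
      (simp_all add: two_cycle_graph_def collider_at_def anc_def)
  ultimately have connected: "d_connected two_cycle_graph j k S"
    if "j = 1 \<and> k = 2 \<or> j = 2 \<and> k = 1" "S = {3} \<or> S = {4}" for j k S
    using that d_connected_sym by auto
  show "Dsep 4 two_cycle_graph \<subseteq> {(1, 2, {}), (2, 1, {}), (1, 2, {3, 4}), (2, 1, {3, 4})}"
  proof
    fix t assume "t \<in> Dsep 4 two_cycle_graph"
    moreover obtain j k S where t: "t = (j, k, S)" by (cases t)
    ultimately have jkS: "(j, k, S) \<in> Dsep 4 two_cycle_graph" by simp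
    then have "\<not> d_connected two_cycle_graph j k S" by (simp add: Dsep_def d_separated_def)
    with Dsep_four_vertices[OF dcg_two_cycle_graph skeleton_two_cycle_graph jkS] connected
    show "t \<in> {(1, 2, {}), (2, 1, {}), (1, 2, {3, 4}), (2, 1, {3, 4})}" unfolding t by auto
  qed
  show "{(1, 2, {}), (2, 1, {}), (1, 2, {3, 4}), (2, 1, {3, 4})} \<subseteq> Dsep 4 two_cycle_graph"
    using d_separated_two_cycle_12_empty d_separated_two_cycle_12_34 d_separated_sym
    by (auto simp: Dsep_def triples_def)
qed

lemma Dsep_three_cycle_graph: "Dsep 4 three_cycle_graph = {(1, 2, {3, 4}), (2, 1, {3, 4})}"
proof
  have "d_connected three_cycle_graph 1 2 S" if "4 \<notin> S" for S
    by (rule d_connectedI[where vs = "[1, 4, 2]" and ds = "[True, True]"])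
      (simp_all add: three_cycle_graph_def collider_at_def that)
  moreover have "d_connected three_cycle_graph 1 2 {4}"
    by (rule d_connectedI[where vs = "[1, 4, 3, 2]" and ds = "[True, False, False]"])
      (simp_all add: three_cycle_graph_def collider_at_def anc_def)
  ultimately have connected: "d_connected three_cycle_graph j k S"
    if "j = 1 \<and> k = 2 \<or> j = 2 \<and> k = 1" "S = {} \<or> S = {3} \<or> S = {4}" for j k S
    using that d_connected_sym by auto
  show "Dsep 4 three_cycle_graph \<subseteq> {(1, 2, {3, 4}), (2, 1, {3, 4})}"
  proof
    fix t assume "t \<in> Dsep 4 three_cycle_graph"
    moreover obtain j k S where t: "t = (j, k, S)" by (cases t)
    ultimately have jkS: "(j, k, S) \<in> Dsep 4 three_cycle_graph" by simp
    then have "\<not> d_connected three_cycle_graph j k S" by (simp add: Dsep_def d_separated_def)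
    with Dsep_four_vertices[OF dcg_three_cycle_graph skeleton_three_cycle_graph jkS] connected
    show "t \<in> {(1, 2, {3, 4}), (2, 1, {3, 4})}" unfolding t by auto
  qed
  show "{(1, 2, {3, 4}), (2, 1, {3, 4})} \<subseteq> Dsep 4 three_cycle_graph"
    using d_separated_three_cycle_12_34 d_separated_sym by (auto simp: Dsep_def triples_def)
qed

text \<open>Rows \<open>0, \<dots>, 5\<close> are the vectors \<open>0000, 0000, 0100, 1001, 1010, 1111\<close>. Under the uniform
  distribution on them \<open>X\<^sub>1\<close> and \<open>X\<^sub>2\<close> are independent, also given \<open>(X\<^sub>3, X\<^sub>4)\<close>, and no
  other conditional independence holds.\<close>

definition six_table :: "nat \<Rightarrow> nat \<Rightarrow> bool" where
  "six_table m i \<longleftrightarrow>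
     (m, i) \<in> {(2, 2), (3, 1), (3, 4), (4, 1), (4, 3), (5, 1), (5, 2), (5, 3), (5, 4)}"

definition six_sample :: "nat \<Rightarrow> nat \<Rightarrow> real" where
  "six_sample m = restrict (\<lambda>i. of_bool (six_table m i)) {1..4}"

interpretation six: empirical_distribution "{1..4}" 6 six_sample
  by unfold_locales (auto simp: six_sample_def space_PiM)

lemma table_cond_indep_six:
  assumes "(j, k, S) \<in> triples 4" "j < k"
  shows "table_cond_indep six_table 6 j k S \<longleftrightarrow> (j, k, S) \<in> {(1, 2, {}), (1, 2, {3, 4})}"
  using triples_4_ordered[OF assms]
  by (simp only: insert_iff empty_iff prod.inject) (elim disjE conjE;
      auto simp: table_cond_indep_def table_count_def six_table_def numeral_eq_Suc lessThan_Suc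
        All_less_Suc all_bool_eq)

lemma Dsep_two_cycle_graph_swap:
  "(j, k, S) \<in> Dsep 4 two_cycle_graph \<longleftrightarrow> (k, j, S) \<in> Dsep 4 two_cycle_graph"
  unfolding Dsep_two_cycle_graph by auto

lemma cond_indep_six_iff:
  assumes "(j, k, S) \<in> triples 4"
  shows "cond_indep six.empirical j k S \<longleftrightarrow> (j, k, S) \<in> Dsep 4 two_cycle_graph"
proof -
  have ordered: "cond_indep six.empirical j k S \<longleftrightarrow> (j, k, S) \<in> Dsep 4 two_cycle_graph"
    if jkS: "(j, k, S) \<in> triples 4" and "j < k" for j k S
  proof -
    have "cond_indep six.empirical j k S \<longleftrightarrow> table_cond_indep six_table 6 j k S"
      by (rule six.cond_indep_empirical_iff_table[OF six_sample_def])
        (use jkS in \<open>auto simp: triples_def\<close>)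
    moreover have "(j, k, S) \<in> Dsep 4 two_cycle_graph \<longleftrightarrow> (j, k, S) \<in> {(1, 2, {}), (1, 2, {3, 4})}"
      using \<open>j < k\<close> unfolding Dsep_two_cycle_graph by auto
    ultimately show ?thesis unfolding table_cond_indep_six[OF that] by (simp only:)
  qed
  have "j \<noteq> k" using assms by (simp add: triples_def)
  then consider "j < k" | "k < j" by linarith
  then show ?thesis
  proof cases
    case 1
    then show ?thesis using ordered[OF assms] by simp
  next
    case 2
    have "cond_indep six.empirical j k S \<longleftrightarrow> cond_indep six.empirical k j S"
      using cond_indep_sym by blast
    then show ?thesis
      unfolding Dsep_two_cycle_graph_swap[of j] using ordered[OF triples_swap[OF assms] 2]
      by (simp only:)
  qed
qed

lemma CFC_two_cycle_six: "CFC 4 two_cycle_graph six.empirical"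
  unfolding CFC_def
proof clarify
  fix j k S assume jkS: "(j, k, S) \<in> triples 4"
  show "d_separated two_cycle_graph j k S \<longleftrightarrow> cond_indep six.empirical j k S"
    unfolding d_separated_iff_Dsep[OF jkS] cond_indep_six_iff[OF jkS] ..
qed

definition diagonal_sample :: "nat \<Rightarrow> nat \<Rightarrow> real" where
  "diagonal_sample m = restrict (\<lambda>i. of_bool (m = 1)) {1..4}"

interpretation diagonal: empirical_distribution "{1..4}" 2 diagonal_sample
  by unfold_locales (auto simp: diagonal_sample_def space_PiM)

lemma cond_indep_diagonal_iff_table:
  "S \<subseteq> {1..4} \<Longrightarrow> j \<in> {1..4} \<Longrightarrow> k \<in> {1..4} \<Longrightarrow>
    cond_indep diagonal.empirical j k S \<longleftrightarrow> table_cond_indep (\<lambda>m i. m = 1) 2 j k S"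
  by (rule diagonal.cond_indep_empirical_iff_table) (simp_all add: diagonal_sample_def)

lemma CMC_three_cycle_diagonal: "CMC 4 three_cycle_graph diagonal.empirical"
proof -
  have "cond_indep diagonal.empirical 1 2 {3, 4}"
    by (subst cond_indep_diagonal_iff_table)
      (auto simp: table_cond_indep_def table_count_def numeral_eq_Suc lessThan_Suc All_less_Suc
        all_bool_eq)
  then show ?thesis
    using cond_indep_sym unfolding CMC_def Dsep_three_cycle_graph by auto
qed

lemma not_CMC_two_cycle_diagonal: "\<not> CMC 4 two_cycle_graph diagonal.empirical"
proof -
  have "\<not> cond_indep diagonal.empirical 1 2 {}"
    by (subst cond_indep_diagonal_iff_table)
      (auto simp: table_cond_indep_def table_count_def numeral_eq_Suc lessThan_Suc All_less_Suc
        all_bool_eq)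
  then show ?thesis unfolding CMC_def Dsep_two_cycle_graph by auto
qed

lemma not_markov_equiv_cycles: "\<not> markov_equiv 4 three_cycle_graph two_cycle_graph"
proof
  assume "markov_equiv 4 three_cycle_graph two_cycle_graph"
  moreover have "distribution 4 diagonal.empirical" by (rule diagonal.distribution_empirical) simp
  ultimately have
    "CMC 4 three_cycle_graph diagonal.empirical \<longleftrightarrow> CMC 4 two_cycle_graph diagonal.empirical"
    unfolding markov_equiv_def by blast
  then show False using CMC_three_cycle_diagonal not_CMC_two_cycle_diagonal by simp
qed

lemma Dsep_three_cycle_psubset: "Dsep 4 three_cycle_graph \<subset> Dsep 4 two_cycle_graph"
proof -
  have "Dsep 4 three_cycle_graph \<subseteq> Dsep 4 two_cycle_graph"
    by (simp add: Dsep_two_cycle_graph Dsep_three_cycle_graph)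
  moreover have "(1, 2, {}) \<in> Dsep 4 two_cycle_graph" "(1, 2, {}) \<notin> Dsep 4 three_cycle_graph"
    by (simp_all add: Dsep_two_cycle_graph Dsep_three_cycle_graph)
  ultimately show ?thesis by blast
qed

lemma CMC_three_cycle_six: "CMC 4 three_cycle_graph six.empirical"
  using CMC_if_CFC[OF CFC_two_cycle_six] Dsep_three_cycle_psubset unfolding CMC_def by blast

lemma weak_SMR_three_cycle_six: "weak_SMR 4 three_cycle_graph six.empirical"
  unfolding weak_SMR_def
proof (intro conjI allI impI)
  show "CMC 4 three_cycle_graph six.empirical" by (rule CMC_three_cycle_six)
  fix G assume "dcg 4 G \<and> CMC 4 G six.empirical \<and> \<not> markov_equiv 4 G three_cycle_graph"
  then have "card (skeleton two_cycle_graph) \<le> card (skeleton G)"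
    using card_skeleton_mono_Dsep[OF dcg_two_cycle_graph]
      Dsep_subset_if_CFC_CMC[OF CFC_two_cycle_six] by blast
  then show "card (skeleton three_cycle_graph) \<le> card (skeleton G)"
    by (simp add: skeleton_two_cycle_graph skeleton_three_cycle_graph)
qed

lemma not_identifiable_SMR_two_cycle_six: "\<not> identifiable_SMR 4 two_cycle_graph six.empirical"
proof -
  have "\<not> card (skeleton two_cycle_graph) < card (skeleton three_cycle_graph)"
    by (simp add: skeleton_two_cycle_graph skeleton_three_cycle_graph)
  then show ?thesis
    unfolding identifiable_SMR_def
    using dcg_three_cycle_graph CMC_three_cycle_six not_markov_equiv_cycles by blast
qed

lemma not_P_minimal_three_cycle_six: "\<not> P_minimal 4 three_cycle_graph six.empirical"
proof -
  have "\<not> markov_equiv 4 two_cycle_graph three_cycle_graph"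
    using not_markov_equiv_cycles by (subst markov_equiv_sym)
  then show ?thesis
    unfolding P_minimal_def
    using dcg_two_cycle_graph CMC_if_CFC[OF CFC_two_cycle_six] Dsep_three_cycle_psubset by blast
qed

theorem theorem3:
  shows "(\<forall>p E P. dcg p E \<and> distribution p P \<and> CFC p E P \<longrightarrow> weak_SMR p E P)
       \<and> (\<exists>p E P. dcg p E \<and> distribution p P \<and> CFC p E P \<and> \<not> identifiable_SMR p E P)
       \<and> (\<forall>p E P. dcg p E \<and> distribution p P \<and> identifiable_SMR p E P \<longrightarrow> P_minimal p E P)
       \<and> (\<exists>p E P. dcg p E \<and> distribution p P \<and> weak_SMR p E P \<and> \<not> P_minimal p E P)"
proof (intro conjI)
  have six: "distribution 4 six.empirical" by (rule six.distribution_empirical) simp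
  show "\<forall>p E P. dcg p E \<and> distribution p P \<and> CFC p E P \<longrightarrow> weak_SMR p E P"
    using weak_SMR_if_CFC by blast
  show "\<exists>p E P. dcg p E \<and> distribution p P \<and> CFC p E P \<and> \<not> identifiable_SMR p E P"
    using dcg_two_cycle_graph six CFC_two_cycle_six not_identifiable_SMR_two_cycle_six by blast
  show "\<forall>p E P. dcg p E \<and> distribution p P \<and> identifiable_SMR p E P \<longrightarrow> P_minimal p E P"
    using P_minimal_if_identifiable_SMR by blast
  show "\<exists>p E P. dcg p E \<and> distribution p P \<and> weak_SMR p E P \<and> \<not> P_minimal p E P"
    using dcg_three_cycle_graph six weak_SMR_three_cycle_six not_P_minimal_three_cycle_six by blast
qed

end
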